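(* Let $X$ be a random vector in $\mathcal{X}\subset\mathbb{R}^d$ with distribution $F$ having a density $f$ with respect to Lebesgue measure $Leb$, and let $\mathcal{G}$ be a class of Borel subsets of $\mathcal{X}$. Assume there is a countable subcollection $\Pi=\{F_i\}_{i\ge1}\subset\mathcal{G}$ forming a partition of $\mathcal{X}$ with $\sigma(\Pi)\subset\mathcal{G}$. Let $\mathcal{F}=\sigma(\Pi)$ and $f_\Pi(x)=\sum_{i\ge1}\mathds{1}_{x\in F_i}\frac{1}{Leb(F_i)}\int_{F_i}f(y)\,dy$. For a class $\mathcal{C}$ of measurable sets define $\textsc{EM}^*_{\mathcal{C}}(t)=\max_{\Omega\in\mathcal{C}}\{F(\Omega)-t\,Leb(\Omega)\}$, and $\textsc{EM}^*(t)=\max_{\Omega\ \text{measurable}}\{F(\Omega)-t\,Leb(\Omega)\}$. Then for every $t\in[0,\|f\|_\infty]$, $$0\le\textsc{EM}^*(t)-\textsc{EM}^*_{\mathcal{F}}(t)\le\|f-f_\Pi\|_{L^1}.$$ Consequently, $\textsc{EM}^*-\textsc{EM}^*_{\mathcal{G}}$ is uniformly bounded on $[0,\|f\|_\infty]$ by $\|f-f_\Pi\|_{L^1}$.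
   Context: $\sigma(\Pi)$ denotes the $\sigma$-algebra generated by $\Pi$; $\|f\|_\infty=\sup_x|f(x)|$. *)

theory Defs
  imports "HOL-Probability.Probability"
begin

text \<open>Excess-mass functional restricted to a class C of measurable sets:
  EM_C(t) = sup over Omega in C of F(Omega) - t * Leb(Omega)  (valued in ereal,
  so that sets of infinite Lebesgue measure are allowed).\<close>
definition EM_class :: "'a::euclidean_space measure \<Rightarrow> 'a set set \<Rightarrow> real \<Rightarrow> ereal" where
  "EM_class F C t = (SUP \<Omega>\<in>C. ereal (measure F \<Omega>) - ereal t * enn2ereal (emeasure lborel \<Omega>))"

definition f_part :: "'a::euclidean_space set set \<Rightarrow> ('a \<Rightarrow> real) \<Rightarrow> 'a \<Rightarrow> real" where
  "f_part P f x = infsum (\<lambda>A. indicator A x * ((1 / measure lborel A) * (\<integral>y\<in>A. f y \<partial>lborel))) P"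

definition sup_norm :: "('a \<Rightarrow> real) \<Rightarrow> ereal" where
  "sup_norm f = (SUP x. ereal \<bar>f x\<bar>)"

end

theory Submission
  imports Defs
begin

text \<open>For a Borel set \<Omega> and the step function g = f_part P f, the superlevel set
  L = {g > t} is a union of cells, hence lies in \<sigma>(P), and g has the same mass as f on every union
  of cells. Integrating the pointwise inequality
  f 1(\<Omega>) + t 1(L) \<le> |f - g| + g 1(L) + t 1(\<Omega>)
  gives F(\<Omega>) - t Leb(\<Omega>) \<le> F(L) - t Leb(L) + \<integral>|f - g|, so the excess mass over all Borel sets
  exceeds that over \<sigma>(P), and a fortiori that over \<G>, by at most the L1 distance \<integral>|f - g|.\<close>

lemma f_part_eq_cell_average:
  assumes "disjoint P" "A \<in> P" "x \<in> A"
  shows "f_part P f x = (\<integral>y\<in>A. f y \<partial>lborel) / measure lborel A"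
proof -
  have "f_part P f x
      = (\<Sum>\<^sub>\<infinity>B\<in>{A}. indicator B x * ((1 / measure lborel B) * (\<integral>y\<in>B. f y \<partial>lborel)))"
    unfolding f_part_def
    by (rule infsum_cong_neutral) (use assms in \<open>auto simp: disjoint_def indicator_def\<close>)
  then show ?thesis using assms by simp
qed

lemma f_part_eq_0_outside:
  assumes "x \<notin> \<Union>P"
  shows "f_part P f x = 0"
  unfolding f_part_def by (rule infsum_0) (use assms in auto)

lemma f_part_nonneg:
  assumes "\<And>x. 0 \<le> f x"
  shows "0 \<le> f_part P f x"
  unfolding f_part_def set_lebesgue_integral_def using assms
  by (intro infsum_nonneg mult_nonneg_nonneg divide_nonneg_nonneg integral_nonneg_AE) auto

lemma borel_measurable_f_part:
  assumes "countable P" "disjoint P" "P \<subseteq> sets lborel"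
  shows "f_part P f \<in> borel_measurable lborel"
proof (rule measurable_piecewise_restrict[of "insert (- \<Union>P) P"])
  have "\<Union>P \<in> sets lborel" using assms by (intro sets.countable_Union) auto
  then show "\<Omega> \<inter> space lborel \<in> sets lborel" if "\<Omega> \<in> insert (- \<Union>P) P" for \<Omega>
    using that assms(3) by auto
  show "f_part P f \<in> borel_measurable (restrict_space lborel \<Omega>)" if "\<Omega> \<in> insert (- \<Union>P) P" for \<Omega>
  proof -
    obtain c where c: "\<And>x. x \<in> \<Omega> \<Longrightarrow> f_part P f x = c"
    proof (cases "\<Omega> \<in> P")
      case True
      then show ?thesis using that f_part_eq_cell_average[OF assms(2) True] by blast
    next
      case False
      then have "\<Omega> = - \<Union>P" using \<open>\<Omega> \<in> insert (- \<Union>P) P\<close> by simp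
      then show ?thesis using that f_part_eq_0_outside[of _ P f] by blast
    qed
    have "(\<lambda>_. c) \<in> borel_measurable (restrict_space lborel \<Omega>)" by simp
    then show ?thesis by (rule measurable_cong[THEN iffD1, rotated]) (simp add: c space_restrict_space)
  qed
  show "countable (insert (- \<Union>P) P)" using assms(1) by simp
  show "space lborel \<subseteq> \<Union>(insert (- \<Union>P) P)" by auto
qed

lemma f_part_level_set_eq_Union:
  assumes "disjoint P" "0 \<le> t"
  shows "{x. t < f_part P f x} = \<Union>{A \<in> P. t < (\<integral>y\<in>A. f y \<partial>lborel) / measure lborel A}"
proof (intro set_eqI iffI)
  fix x assume x: "x \<in> {x. t < f_part P f x}"
  then have "x \<in> \<Union>P" using f_part_eq_0_outside[of x P f] assms(2) by fastforce
  then obtain A where "A \<in> P" "x \<in> A" by blast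
  with x show "x \<in> \<Union>{A \<in> P. t < (\<integral>y\<in>A. f y \<partial>lborel) / measure lborel A}"
    using f_part_eq_cell_average[OF assms(1)] by auto
next
  fix x assume "x \<in> \<Union>{A \<in> P. t < (\<integral>y\<in>A. f y \<partial>lborel) / measure lborel A}"
  then show "x \<in> {x. t < f_part P f x}" using f_part_eq_cell_average[OF assms(1)] by auto
qed

lemma nn_integral_f_part_cell:
  assumes "disjoint P" "A \<in> P" "A \<in> sets lborel" "0 < emeasure lborel A" "emeasure lborel A < \<infinity>"
    and "integrable lborel f" "\<And>x. 0 \<le> f x"
  shows "(\<integral>\<^sup>+x. ennreal (f_part P f x) * indicator A x \<partial>lborel)
    = (\<integral>\<^sup>+x. ennreal (f x) * indicator A x \<partial>lborel)"
proof -
  define c where "c = (\<integral>y\<in>A. f y \<partial>lborel) / measure lborel A"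
  have LebA: "emeasure lborel A = ennreal (measure lborel A)"
    using assms(5) by (intro emeasure_eq_ennreal_measure) simp
  then have Leb_pos: "0 < measure lborel A" using assms(4) by simp
  have int_nonneg: "0 \<le> (\<integral>y\<in>A. f y \<partial>lborel)"
    unfolding set_lebesgue_integral_def using assms(7) by (intro integral_nonneg_AE) auto
  have "(\<integral>\<^sup>+x. ennreal (f_part P f x) * indicator A x \<partial>lborel)
      = (\<integral>\<^sup>+x. ennreal c * indicator A x \<partial>lborel)"
    by (intro nn_integral_cong) (auto simp: c_def f_part_eq_cell_average[OF assms(1,2)] indicator_def)
  also have "\<dots> = ennreal c * emeasure lborel A"
    using assms(3) by (rule nn_integral_cmult_indicator)
  also have "\<dots> = ennreal (c * measure lborel A)"
    unfolding LebA by (rule ennreal_mult'[symmetric]) (use int_nonneg Leb_pos in \<open>simp add: c_def\<close>)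
  also have "c * measure lborel A = (\<integral>y\<in>A. f y \<partial>lborel)"
    using Leb_pos by (simp add: c_def)
  also have "ennreal \<dots> = (\<integral>\<^sup>+x. ennreal (f x * indicator A x) \<partial>lborel)"
    unfolding set_lebesgue_integral_def using integrable_mult_indicator[OF assms(3,6)] assms(7)
    by (subst nn_integral_eq_integral) (auto simp: mult.commute)
  also have "\<dots> = (\<integral>\<^sup>+x. ennreal (f x) * indicator A x \<partial>lborel)"
    by (intro nn_integral_cong) (simp add: indicator_def)
  finally show ?thesis .
qed

lemma emeasure_density_f_part_Union:
  assumes "countable P" "disjoint P" "P \<subseteq> sets lborel"
    and "\<And>A. A \<in> P \<Longrightarrow> 0 < emeasure lborel A \<and> emeasure lborel A < \<infinity>"
    and "integrable lborel f" "\<And>x. 0 \<le> f x" "Q \<subseteq> P"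
  shows "emeasure (density lborel (\<lambda>x. ennreal (f_part P f x))) (\<Union>Q)
    = emeasure (density lborel (\<lambda>x. ennreal (f x))) (\<Union>Q)"
proof -
  have Q: "countable Q" "Q \<subseteq> sets lborel" "disjoint_family_on (\<lambda>A. A) Q"
    using assms(1-3,7) countable_subset by (auto simp: disjoint_family_on_def disjoint_def)
  have UN: "emeasure N (\<Union>Q) = (\<integral>\<^sup>+A. emeasure N A \<partial>count_space Q)"
    if "sets N = sets lborel" for N :: "'a measure"
    using emeasure_UN_countable[of Q "\<lambda>A. A" N] Q that by auto
  have "emeasure (density lborel (\<lambda>x. ennreal (f_part P f x))) (\<Union>Q)
      = (\<integral>\<^sup>+A. emeasure (density lborel (\<lambda>x. ennreal (f_part P f x))) A \<partial>count_space Q)"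
    by (rule UN) simp
  also have "\<dots> = (\<integral>\<^sup>+A. emeasure (density lborel (\<lambda>x. ennreal (f x))) A \<partial>count_space Q)"
  proof (intro nn_integral_cong)
    fix A assume "A \<in> space (count_space Q)"
    then have A: "A \<in> P" "A \<in> sets lborel" using assms(3,7) by auto
    have "f \<in> borel_measurable lborel" using assms(5) by auto
    with A show "emeasure (density lborel (\<lambda>x. ennreal (f_part P f x))) A
        = emeasure (density lborel (\<lambda>x. ennreal (f x))) A"
      using nn_integral_f_part_cell[OF assms(2) A(1,2) _ _ assms(5,6)] assms(4)[OF A(1)]
        borel_measurable_f_part[OF assms(1-3)]
      by (simp add: emeasure_density)
  qed
  also have "\<dots> = emeasure (density lborel (\<lambda>x. ennreal (f x))) (\<Union>Q)"
    by (rule UN[symmetric]) simp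
  finally show ?thesis .
qed

lemma emeasure_density_add_level_set_le:
  fixes f g :: "'a \<Rightarrow> real"
  assumes "f \<in> borel_measurable N" "g \<in> borel_measurable N" "\<And>x. 0 \<le> f x" "\<And>x. 0 \<le> g x"
    and "0 \<le> t" "\<Omega> \<in> sets N"
  defines "L \<equiv> {x \<in> space N. t < g x}"
  shows "emeasure (density N f) \<Omega> + t * emeasure N L
    \<le> (\<integral>\<^sup>+x. ennreal \<bar>f x - g x\<bar> \<partial>N) + emeasure (density N g) L + t * emeasure N \<Omega>"
proof -
  have L: "L \<in> sets N" unfolding L_def using assms(2) by measurable
  have pointwise: "f x * indicator \<Omega> x + t * indicator L x
      \<le> \<bar>f x - g x\<bar> + g x * indicator L x + t * indicator \<Omega> x"
    if "x \<in> space N" for x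
    using that assms(3-5) by (cases "x \<in> \<Omega>"; cases "x \<in> L") (auto simp: indicator_def L_def)
  have "emeasure (density N f) \<Omega> + t * emeasure N L
      = (\<integral>\<^sup>+x. ennreal (f x) * indicator \<Omega> x + ennreal t * indicator L x \<partial>N)"
    using assms(1,6) L by (simp add: emeasure_density nn_integral_add nn_integral_cmult_indicator)
  also have "\<dots> = (\<integral>\<^sup>+x. ennreal (f x * indicator \<Omega> x + t * indicator L x) \<partial>N)"
    using assms(3,5) by (intro nn_integral_cong) (simp add: indicator_def)
  also have "\<dots> \<le> (\<integral>\<^sup>+x. ennreal (\<bar>f x - g x\<bar> + g x * indicator L x + t * indicator \<Omega> x) \<partial>N)"
    by (intro nn_integral_mono ennreal_leI pointwise)
  also have "\<dots> = (\<integral>\<^sup>+x. ennreal \<bar>f x - g x\<bar> + ennreal (g x) * indicator L x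
      + ennreal t * indicator \<Omega> x \<partial>N)"
    using assms(4,5) by (intro nn_integral_cong) (simp add: indicator_def)
  also have "\<dots> = (\<integral>\<^sup>+x. ennreal \<bar>f x - g x\<bar> \<partial>N) + emeasure (density N g) L + t * emeasure N \<Omega>"
    using assms(1,2,6) L by (simp add: emeasure_density nn_integral_add nn_integral_cmult_indicator)
  finally show ?thesis .
qed

lemma finite_measure_density_integrable:
  assumes "integrable M f"
  shows "finite_measure (density M (\<lambda>x. ennreal (f x)))"
proof (rule finite_measureI)
  have "(\<integral>\<^sup>+x. ennreal (f x) \<partial>M) \<le> (\<integral>\<^sup>+x. ennreal (norm (f x)) \<partial>M)"
    by (intro nn_integral_mono ennreal_leI) simp
  also have "\<dots> < \<infinity>" using assms by (simp add: integrable_iff_bounded)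
  finally show "emeasure (density M (\<lambda>x. ennreal (f x))) (space (density M (\<lambda>x. ennreal (f x)))) \<noteq> \<infinity>"
    using assms by (simp add: emeasure_density)
qed

lemma ereal_diff_le_of_add_le:
  fixes a c p q d e :: ereal
  assumes "\<bar>a\<bar> \<noteq> \<infinity>" "\<bar>c\<bar> \<noteq> \<infinity>" "0 \<le> p" "0 \<le> q" "0 \<le> d" "0 \<le> e"
    and "a + p \<le> d + c + q" "c - p \<le> e"
  shows "a - q \<le> e + d"
proof (cases "q = \<infinity> \<or> d = \<infinity>")
  case True
  then show ?thesis using assms(1,6) by auto
next
  case False
  with assms(1,2,4,5) obtain a' c' q' d' where
    "a = ereal a'" "c = ereal c'" "q = ereal q'" "d = ereal d'"
    by (cases a; cases c; cases q; cases d) auto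
  moreover from calculation assms(3,7) obtain p' where "p = ereal p'"
    by (cases p) auto
  ultimately show ?thesis using assms(6-8) by (cases e) auto
qed

lemma ereal_diff_bounds:
  fixes a b d :: ereal
  assumes "0 \<le> a" "a \<le> b" "b \<noteq> \<infinity>" "b \<le> a + d"
  shows "0 \<le> b - a \<and> b - a \<le> d"
  using assms by (cases a; cases b; cases d) auto

lemma EM_class_nonneg: "{} \<in> C \<Longrightarrow> 0 \<le> EM_class F C t"
  unfolding EM_class_def by (intro SUP_upper2) (auto simp: zero_ennreal.rep_eq)

lemma EM_class_mono: "C \<subseteq> C' \<Longrightarrow> EM_class F C t \<le> EM_class F C' t"
  unfolding EM_class_def by (rule SUP_subset_mono) auto

lemma EM_class_le_measure_space:
  assumes "finite_measure F" "0 \<le> t"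
  shows "EM_class F C t \<le> measure F (space F)"
  unfolding EM_class_def
proof (rule SUP_least)
  fix \<Omega>
  have "ereal (measure F \<Omega>) - ereal t * enn2ereal (emeasure lborel \<Omega>) \<le> ereal (measure F \<Omega>)"
    using assms(2) by (cases "emeasure lborel \<Omega>") (auto simp: ereal_diff_le_self)
  also have "\<dots> \<le> measure F (space F)"
    using finite_measure.bounded_measure[OF assms(1)] by simp
  finally show "ereal (measure F \<Omega>) - ereal t * enn2ereal (emeasure lborel \<Omega>) \<le> measure F (space F)" .
qed

lemma EM_class_le_sigma_partition:
  assumes "countable P" "disjoint P" "P \<subseteq> sets lborel"
    and "\<And>A. A \<in> P \<Longrightarrow> 0 < emeasure lborel A \<and> emeasure lborel A < \<infinity>"
    and "integrable lborel f" "\<And>x. 0 \<le> f x" "0 \<le> t"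
  shows "EM_class (density lborel f) (sets lborel) t
    \<le> EM_class (density lborel f) (sigma_sets (\<Union>P) P) t
      + enn2ereal (\<integral>\<^sup>+x. ennreal \<bar>f x - f_part P f x\<bar> \<partial>lborel)"
  unfolding EM_class_def[of _ "sets lborel"]
proof (rule SUP_least)
  fix \<Omega> :: "'a set" assume \<Omega>: "\<Omega> \<in> sets lborel"
  define F where "F = density lborel (\<lambda>x. ennreal (f x))"
  define L where "L = {x. t < f_part P f x}"
  define D where "D = (\<integral>\<^sup>+x. ennreal \<bar>f x - f_part P f x\<bar> \<partial>lborel)"
  have fm: "f \<in> borel_measurable lborel" using assms(5) by auto
  interpret F: finite_measure F
    unfolding F_def using assms(5) by (rule finite_measure_density_integrable)
  define Q where "Q = {A \<in> P. t < (\<integral>y\<in>A. f y \<partial>lborel) / measure lborel A}"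
  have Q: "Q \<subseteq> P" "L = \<Union>Q"
    unfolding Q_def L_def using f_part_level_set_eq_Union[OF assms(2,7)] by auto
  have L_sigma: "L \<in> sigma_sets (\<Union>P) P"
    unfolding Q(2) using Q(1) countable_subset[OF Q(1) assms(1)]
    by (intro sigma_sets_UNION) (auto intro: sigma_sets.Basic)
  have "emeasure F \<Omega> + t * emeasure lborel L
      \<le> D + emeasure (density lborel (\<lambda>x. ennreal (f_part P f x))) L + t * emeasure lborel \<Omega>"
    using emeasure_density_add_level_set_le[OF fm borel_measurable_f_part[OF assms(1-3)] assms(6)
        f_part_nonneg[of f, OF assms(6)] assms(7) \<Omega>]
    unfolding F_def D_def L_def by simp
  also have "emeasure (density lborel (\<lambda>x. ennreal (f_part P f x))) L = emeasure F L"
    unfolding F_def Q(2) by (rule emeasure_density_f_part_Union[OF assms(1-6) Q(1)])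
  finally have "emeasure F \<Omega> + t * emeasure lborel L \<le> D + emeasure F L + t * emeasure lborel \<Omega>" .
  then have "measure F \<Omega> + ereal t * enn2ereal (emeasure lborel L)
      \<le> enn2ereal D + measure F L + ereal t * enn2ereal (emeasure lborel \<Omega>)"
    using assms(7) by (simp add: less_eq_ennreal.rep_eq plus_ennreal.rep_eq times_ennreal.rep_eq
        enn2ereal_ennreal F.emeasure_eq_measure)
  moreover have "measure F L - ereal t * enn2ereal (emeasure lborel L) \<le> EM_class F (sigma_sets (\<Union>P) P) t"
    unfolding EM_class_def using L_sigma by (rule SUP_upper2) simp
  moreover have "0 \<le> EM_class F (sigma_sets (\<Union>P) P) t"
    by (intro EM_class_nonneg sigma_sets.Empty)
  ultimately show "measure F \<Omega> - ereal t * enn2ereal (emeasure lborel \<Omega>)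
      \<le> EM_class F (sigma_sets (\<Union>P) P) t + enn2ereal D"
    using assms(7) by (intro ereal_diff_le_of_add_le) auto
qed

lemma EM_class_diff_le_dist_f_part:
  assumes "countable P" "disjoint P" "P \<subseteq> sets lborel"
    and "\<And>A. A \<in> P \<Longrightarrow> 0 < emeasure lborel A \<and> emeasure lborel A < \<infinity>"
    and "integrable lborel f" "\<And>x. 0 \<le> f x" "0 \<le> t"
    and "sigma_sets (\<Union>P) P \<subseteq> C" "C \<subseteq> C'" "C' \<subseteq> sets lborel"
  shows "0 \<le> EM_class (density lborel f) C' t - EM_class (density lborel f) C t
    \<and> EM_class (density lborel f) C' t - EM_class (density lborel f) C t
        \<le> enn2ereal (\<integral>\<^sup>+x. ennreal \<bar>f x - f_part P f x\<bar> \<partial>lborel)"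
proof (rule ereal_diff_bounds)
  show "0 \<le> EM_class (density lborel f) C t"
    using assms(8) by (intro EM_class_nonneg) (auto intro: sigma_sets.Empty)
  show "EM_class (density lborel f) C t \<le> EM_class (density lborel f) C' t"
    using assms(9) by (rule EM_class_mono)
  have "EM_class (density lborel f) C' t \<le> measure (density lborel f) (space (density lborel f))"
    using finite_measure_density_integrable[OF assms(5)] assms(7) by (rule EM_class_le_measure_space)
  then show "EM_class (density lborel f) C' t \<noteq> \<infinity>" by auto
  have "EM_class (density lborel f) C' t \<le> EM_class (density lborel f) (sets lborel) t"
    using assms(10) by (rule EM_class_mono)
  also have "\<dots> \<le> EM_class (density lborel f) (sigma_sets (\<Union>P) P) t
      + enn2ereal (\<integral>\<^sup>+x. ennreal \<bar>f x - f_part P f x\<bar> \<partial>lborel)"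
    by (rule EM_class_le_sigma_partition[OF assms(1-7)])
  also have "\<dots> \<le> EM_class (density lborel f) C t
      + enn2ereal (\<integral>\<^sup>+x. ennreal \<bar>f x - f_part P f x\<bar> \<partial>lborel)"
    using assms(8) by (intro add_right_mono EM_class_mono)
  finally show "EM_class (density lborel f) C' t \<le> EM_class (density lborel f) C t
      + enn2ereal (\<integral>\<^sup>+x. ennreal \<bar>f x - f_part P f x\<bar> \<partial>lborel)" .
qed

theorem lemma3:
  fixes M :: "'s measure" and X :: "'s \<Rightarrow> 'a::euclidean_space"
    and f :: "'a \<Rightarrow> real" and \<X> :: "'a set"
    and \<G> :: "'a set set" and P :: "'a set set"
  assumes "prob_space M"
    and "\<X> \<in> sets lborel"
    and "distributed M lborel X (\<lambda>x. ennreal (f x))"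
    and "\<And>x. 0 \<le> f x"
    and "AE \<omega> in M. X \<omega> \<in> \<X>"
    and "\<G> \<subseteq> {A \<in> sets lborel. A \<subseteq> \<X>}"
    and "countable P" and "P \<subseteq> \<G>"
    and "disjoint P" and "{} \<notin> P" and "\<Union>P = \<X>"
    and "\<And>A. A \<in> P \<Longrightarrow> 0 < emeasure lborel A \<and> emeasure lborel A < \<infinity>"
    and "sigma_sets \<X> P \<subseteq> \<G>"
  shows "(\<forall>t. 0 \<le> t \<and> ereal t \<le> sup_norm f \<longrightarrow>
      0 \<le> EM_class (distr M lborel X) {\<Omega> \<in> sets lborel. \<Omega> \<subseteq> \<X>} t
             - EM_class (distr M lborel X) (sigma_sets \<X> P) t
      \<and> EM_class (distr M lborel X) {\<Omega> \<in> sets lborel. \<Omega> \<subseteq> \<X>} t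
             - EM_class (distr M lborel X) (sigma_sets \<X> P) t
          \<le> enn2ereal (\<integral>\<^sup>+ x. ennreal \<bar>f x - f_part P f x\<bar> \<partial>lborel))
    \<and> (\<forall>t. 0 \<le> t \<and> ereal t \<le> sup_norm f \<longrightarrow>
      0 \<le> EM_class (distr M lborel X) {\<Omega> \<in> sets lborel. \<Omega> \<subseteq> \<X>} t
             - EM_class (distr M lborel X) \<G> t
      \<and> EM_class (distr M lborel X) {\<Omega> \<in> sets lborel. \<Omega> \<subseteq> \<X>} t
             - EM_class (distr M lborel X) \<G> t
          \<le> enn2ereal (\<integral>\<^sup>+ x. ennreal \<bar>f x - f_part P f x\<bar> \<partial>lborel))"
proof -
  have F: "distr M lborel X = density lborel (\<lambda>x. ennreal (f x))"
    using assms(3) by (rule distributed_distr_eq_density)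
  have "integrable lborel f"
    using distributed_integrable[OF assms(3), of "\<lambda>_. 1"] assms(4)
    by (simp add: finite_measure.integrable_const prob_space.finite_measure[OF assms(1)])
  moreover have "P \<subseteq> sets lborel" using assms(6,8) by auto
  ultimately have bounds: "0 \<le> EM_class (distr M lborel X) {\<Omega> \<in> sets lborel. \<Omega> \<subseteq> \<X>} t
        - EM_class (distr M lborel X) C t
      \<and> EM_class (distr M lborel X) {\<Omega> \<in> sets lborel. \<Omega> \<subseteq> \<X>} t
        - EM_class (distr M lborel X) C t
        \<le> enn2ereal (\<integral>\<^sup>+ x. ennreal \<bar>f x - f_part P f x\<bar> \<partial>lborel)"
    if "sigma_sets \<X> P \<subseteq> C" "C \<subseteq> {\<Omega> \<in> sets lborel. \<Omega> \<subseteq> \<X>}" "0 \<le> t" for C t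
    unfolding F using EM_class_diff_le_dist_f_part[OF assms(7,9) _ assms(12) _ assms(4) that(3)] that
    by (auto simp: assms(11))
  have "sigma_sets \<X> P \<subseteq> {\<Omega> \<in> sets lborel. \<Omega> \<subseteq> \<X>}" using assms(6,13) by auto
  then show ?thesis using bounds[OF order_refl] bounds[OF assms(13,6)] by simp
qed

end
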